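(* Assume (A1) and (A2) below. Then for any $s\in\mathcal S$ and policy $\pi$, $$\sum_{a,s'}\mathbb{E}_{p\sim\Phi_t}\big[p(a,s'\mid s)V^{\pi,p}(s')\big]=\sum_{a,s'}\bar p_t(a,s'\mid s)\,\mathbb{E}_{p\sim\Phi_t}\big[V^{\pi,p}(s')\big].$$
   Context: Let $\mathcal S$ be a finite state space, $\mathcal A$ a finite action space, $r:\mathcal S\times\mathcal A\to\mathbb R$ a known bounded (deterministic) reward function and $\gamma\in[0,1)$ a discount factor. A transition function $p$ assigns to each $(s,a)$ a probability distribution $p(\cdot\mid s,a)$ on $\mathcal S$. A policy $\pi$ gives distributions $\pi(\cdot\mid s)$ on $\mathcal A$; write $p(a,s'\mid s)=\pi(a\mid s)p(s'\mid s,a)$. For a transition function $p$, the value function is $V^{\pi,p}(s)=\mathbb E\big[\sum_{h\ge 0}\gamma^h r(s_h,a_h)\mid s_0=s\big]$ with $a_h\sim\pi(\cdot\mid s_h)$, $s_{h+1}\sim p(\cdot\mid s_h,a_h)$. The transition function $p$ is a random variable with distribution $\Phi_t$; $\bar p_t(s'\mid s,a)=\mathbb E_{p\sim\Phi_t}[p(s'\mid s,a)]$ and $\bar p_t(a,s'\mid s)=\pi(a\mid s)\bar p_t(s'\mid s,a)$. Assumptions: (A1) (independent transitions) $p(s'\mid x,a)$ and $p(s'\mid y,a)$ are independent random variables if $x\neq y$; (A2) (acyclic MDP) the MDP is a directed acyclic graph, i.e., states are not visited more than once in any given episode. *)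

theory Defs
  imports "HOL-Probability.Probability"
begin

text \<open>Conventions: a transition function is p :: 's => 'a => 's => real with
  p x a y = p(y | x, a); a policy is pi :: 's => 'a => real with pi x a = pi(a | x).\<close>

text \<open>Distribution of the state at step h, started at s, under policy pi and
  transition function p (sub-stochastic: missing mass = episode has ended).\<close>
primrec state_dist ::
  "('s::finite \<Rightarrow> 'a::finite \<Rightarrow> real) \<Rightarrow> ('s \<Rightarrow> 'a \<Rightarrow> 's \<Rightarrow> real) \<Rightarrow> 's \<Rightarrow> nat \<Rightarrow> 's \<Rightarrow> real"
where
  "state_dist \<pi> p s 0 = (\<lambda>x. if x = s then 1 else 0)"
| "state_dist \<pi> p s (Suc h) =
     (\<lambda>y. \<Sum>x\<in>UNIV. state_dist \<pi> p s h x * (\<Sum>a\<in>UNIV. \<pi> x a * p x a y))"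

definition value_fun ::
  "real \<Rightarrow> ('s::finite \<Rightarrow> 'a::finite \<Rightarrow> real) \<Rightarrow> ('s \<Rightarrow> 'a \<Rightarrow> real) \<Rightarrow> ('s \<Rightarrow> 'a \<Rightarrow> 's \<Rightarrow> real) \<Rightarrow> 's \<Rightarrow> real"
where
  "value_fun \<gamma> r \<pi> p s =
     (\<Sum>h. \<gamma> ^ h * (\<Sum>x\<in>UNIV. state_dist \<pi> p s h x * (\<Sum>a\<in>UNIV. \<pi> x a * r x a)))"

definition mean_trans :: "'w measure \<Rightarrow> ('w \<Rightarrow> 's \<Rightarrow> 'a \<Rightarrow> 's \<Rightarrow> real) \<Rightarrow> 's \<Rightarrow> 'a \<Rightarrow> 's \<Rightarrow> real"
where
  "mean_trans M P x a y = (\<integral>\<omega>. P \<omega> x a y \<partial>M)"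

end

theory Submission
  imports Defs
begin

text \<open>If (s, y) is not an edge then p(y | s, a) vanishes and both sides are zero. Otherwise,
  by acyclicity, s is not reachable from y, so V^{pi,p}(y) is a function of the rows p(. | x, .)
  of the states x reachable from y alone, none of which is the row of s. By (A1) the entry
  p(y | s, a) is then independent of V^{pi,p}(y), and the expectation of the product factorises.\<close>

definition closed_under_trans :: "('s \<Rightarrow> 'a \<Rightarrow> 's \<Rightarrow> real) \<Rightarrow> 's set \<Rightarrow> bool"
  where "closed_under_trans p R \<longleftrightarrow> (\<forall>x\<in>R. \<forall>a z. p x a z \<noteq> 0 \<longrightarrow> z \<in> R)"

lemma state_dist_nonneg:
  assumes "\<And>x a z. 0 \<le> p x a z" "\<And>x a. 0 \<le> \<pi> x a"
  shows "0 \<le> state_dist \<pi> p y h z"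
  by (induction h arbitrary: z) (auto intro!: sum_nonneg mult_nonneg_nonneg simp: assms)

lemma sum_state_dist_le_1:
  fixes \<pi> :: "'s::finite \<Rightarrow> 'a::finite \<Rightarrow> real"
  assumes p: "\<And>x a z. 0 \<le> p x a z" "\<And>x a. (\<Sum>z\<in>UNIV. p x a z) \<le> 1"
    and \<pi>: "\<And>x a. 0 \<le> \<pi> x a" "\<And>x. (\<Sum>a\<in>UNIV. \<pi> x a) \<le> 1"
  shows "(\<Sum>z\<in>UNIV. state_dist \<pi> p y h z) \<le> 1"
proof (induction h)
  case 0
  show ?case by simp
next
  case (Suc h)
  let ?d = "state_dist \<pi> p y h"
  have "(\<Sum>z\<in>UNIV. state_dist \<pi> p y (Suc h) z)
      = (\<Sum>x\<in>UNIV. \<Sum>z\<in>UNIV. \<Sum>a\<in>UNIV. ?d x * (\<pi> x a * p x a z))"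
    by (simp only: state_dist.simps sum_distrib_left) (rule sum.swap)
  also have "\<dots> = (\<Sum>x\<in>UNIV. \<Sum>a\<in>UNIV. \<Sum>z\<in>UNIV. ?d x * (\<pi> x a * p x a z))"
    by (intro sum.cong refl sum.swap)
  also have "\<dots> = (\<Sum>x\<in>UNIV. ?d x * (\<Sum>a\<in>UNIV. \<pi> x a * (\<Sum>z\<in>UNIV. p x a z)))"
    by (simp add: sum_distrib_left)
  also have "\<dots> \<le> (\<Sum>x\<in>UNIV. ?d x * (\<Sum>a\<in>UNIV. \<pi> x a))"
    using p \<pi> by (intro sum_mono mult_left_mono state_dist_nonneg) (auto intro: mult_left_le)
  also have "\<dots> \<le> (\<Sum>x\<in>UNIV. ?d x)"
    using p \<pi> by (intro sum_mono mult_left_le state_dist_nonneg)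
  finally show ?case using Suc by linarith
qed

lemma abs_value_fun_le:
  fixes \<pi> :: "'s::finite \<Rightarrow> 'a::finite \<Rightarrow> real"
  assumes p: "\<And>x a z. 0 \<le> p x a z" "\<And>x a. (\<Sum>z\<in>UNIV. p x a z) \<le> 1"
    and \<pi>: "\<And>x a. 0 \<le> \<pi> x a" "\<And>x. (\<Sum>a\<in>UNIV. \<pi> x a) \<le> 1"
    and \<gamma>: "0 \<le> \<gamma>" "\<gamma> < 1"
  shows "\<bar>value_fun \<gamma> r \<pi> p y\<bar> \<le> (\<Sum>x\<in>UNIV. \<Sum>a\<in>UNIV. \<bar>r x a\<bar>) / (1 - \<gamma>)"
proof -
  define B where "B = (\<Sum>x\<in>UNIV. \<Sum>a\<in>UNIV. \<bar>r x a\<bar>)"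
  have \<pi>_le_1: "\<pi> x a \<le> 1" for x a
  proof -
    have "\<pi> x a \<le> (\<Sum>a'\<in>UNIV. \<pi> x a')"
      using \<pi>(1) by (intro member_le_sum) auto
    then show ?thesis using \<pi>(2)[of x] by linarith
  qed
  have step: "\<bar>\<Sum>x\<in>UNIV. state_dist \<pi> p y h x * (\<Sum>a\<in>UNIV. \<pi> x a * r x a)\<bar> \<le> B" for h
  proof -
    have reward: "\<bar>\<Sum>a\<in>UNIV. \<pi> x a * r x a\<bar> \<le> B" for x
    proof -
      have "\<bar>\<Sum>a\<in>UNIV. \<pi> x a * r x a\<bar> \<le> (\<Sum>a\<in>UNIV. \<bar>r x a\<bar>)"
        using \<pi> \<pi>_le_1 by (intro order.trans[OF sum_abs] sum_mono)
          (auto simp: abs_mult intro!: mult_left_le_one_le)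
      also have "\<dots> \<le> B"
        unfolding B_def by (intro member_le_sum[where f="\<lambda>x. \<Sum>a\<in>UNIV. \<bar>r x a\<bar>"]) auto
      finally show ?thesis .
    qed
    have "\<bar>\<Sum>x\<in>UNIV. state_dist \<pi> p y h x * (\<Sum>a\<in>UNIV. \<pi> x a * r x a)\<bar>
        \<le> (\<Sum>x\<in>UNIV. state_dist \<pi> p y h x) * B"
      unfolding sum_distrib_right using p \<pi> reward
      by (intro order.trans[OF sum_abs] sum_mono)
        (simp add: abs_mult abs_of_nonneg[OF state_dist_nonneg[OF p(1) \<pi>(1)]]
          mult_left_mono[OF reward state_dist_nonneg[OF p(1) \<pi>(1)]])
    also have "\<dots> \<le> B"
      using sum_state_dist_le_1[OF p \<pi>] unfolding B_def
      by (intro mult_left_le_one_le) (auto intro!: sum_nonneg state_dist_nonneg p \<pi>)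
    finally show ?thesis .
  qed
  have "\<bar>value_fun \<gamma> r \<pi> p y\<bar> \<le> (\<Sum>h. \<gamma> ^ h * B)"
    unfolding value_fun_def real_norm_def[symmetric] using \<gamma> step
    by (intro norm_suminf_le summable_mult2 summable_geometric) (auto simp: abs_mult mult_left_mono)
  also have "\<dots> = B / (1 - \<gamma>)"
    using \<gamma> by (simp add: suminf_mult2[symmetric] suminf_geometric)
  finally show ?thesis unfolding B_def .
qed

lemma state_dist_closed:
  assumes "closed_under_trans p R" "y \<in> R" "state_dist \<pi> p y h z \<noteq> 0"
  shows "z \<in> R"
  using assms(3)
proof (induction h arbitrary: z)
  case 0
  then show ?case using assms(2) by (simp split: if_splits)
next
  case (Suc h)
  then have "(\<Sum>x\<in>UNIV. state_dist \<pi> p y h x * (\<Sum>a\<in>UNIV. \<pi> x a * p x a z)) \<noteq> 0"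
    by simp
  then obtain x where "state_dist \<pi> p y h x * (\<Sum>a\<in>UNIV. \<pi> x a * p x a z) \<noteq> 0"
    using sum.not_neutral_contains_not_neutral by blast
  then have "state_dist \<pi> p y h x \<noteq> 0" "(\<Sum>a\<in>UNIV. \<pi> x a * p x a z) \<noteq> 0"
    by auto
  moreover from this(2) obtain a where "\<pi> x a * p x a z \<noteq> 0"
    using sum.not_neutral_contains_not_neutral by blast
  ultimately show ?case
    using Suc.IH assms(1) unfolding closed_under_trans_def by auto
qed

lemma state_dist_cong_closed:
  assumes "closed_under_trans p R" "y \<in> R" "\<And>x. x \<in> R \<Longrightarrow> p x = p' x"
  shows "state_dist \<pi> p y h = state_dist \<pi> p' y h"
proof (induction h)
  case 0
  show ?case by simp
next
  case (Suc h)
  have "state_dist \<pi> p y h x * (\<Sum>a\<in>UNIV. \<pi> x a * p x a z)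
      = state_dist \<pi> p' y h x * (\<Sum>a\<in>UNIV. \<pi> x a * p' x a z)" for x z
  proof (cases "x \<in> R")
    case True
    then show ?thesis by (simp add: Suc assms(3))
  next
    case False
    then have "state_dist \<pi> p y h x = 0"
      using state_dist_closed[OF assms(1,2)] by blast
    then show ?thesis by (simp add: Suc)
  qed
  then show ?case by simp
qed

lemma value_fun_cong_closed:
  assumes "closed_under_trans p R" "y \<in> R" "\<And>x. x \<in> R \<Longrightarrow> p x = p' x"
  shows "value_fun \<gamma> r \<pi> p y = value_fun \<gamma> r \<pi> p' y"
  unfolding value_fun_def by (simp add: state_dist_cong_closed[OF assms])

lemma borel_measurable_state_dist:
  assumes [measurable]: "\<And>x a z. (\<lambda>\<omega>. p \<omega> x a z) \<in> borel_measurable N"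
  shows "(\<lambda>\<omega>. state_dist \<pi> (p \<omega>) y h z) \<in> borel_measurable N"
  by (induction h arbitrary: z) auto

lemma borel_measurable_value_fun:
  assumes "\<And>x a z. (\<lambda>\<omega>. p \<omega> x a z) \<in> borel_measurable N"
  shows "(\<lambda>\<omega>. value_fun \<gamma> r \<pi> (p \<omega>) y) \<in> borel_measurable N"
  unfolding value_fun_def using borel_measurable_state_dist[OF assms] by measurable

lemma (in prob_space) indep_vars_integral_mult_restrict:
  fixes f :: "'b \<Rightarrow> real" and g :: "('i \<Rightarrow> 'b) \<Rightarrow> real"
  assumes indep: "indep_vars M' X I" and "i \<in> I" "R \<subseteq> I" "i \<notin> R"
    and f: "f \<in> borel_measurable (M' i)" and g: "g \<in> borel_measurable (PiM R M')"
    and "integrable M (\<lambda>\<omega>. f (X i \<omega>))" "integrable M (\<lambda>\<omega>. g (restrict (\<lambda>j. X j \<omega>) R))"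
  shows "(\<integral>\<omega>. f (X i \<omega>) * g (restrict (\<lambda>j. X j \<omega>) R) \<partial>M)
       = (\<integral>\<omega>. f (X i \<omega>) \<partial>M) * (\<integral>\<omega>. g (restrict (\<lambda>j. X j \<omega>) R) \<partial>M)"
proof -
  have "(\<lambda>h. f (h i)) \<in> borel_measurable (PiM {i} M')"
    using f by measurable
  then have "indep_var borel ((\<lambda>h. f (h i)) \<circ> (\<lambda>\<omega>. restrict (\<lambda>j. X j \<omega>) {i}))
      borel (g \<circ> (\<lambda>\<omega>. restrict (\<lambda>j. X j \<omega>) R))"
    using assms by (intro indep_var_compose[OF indep_var_restrict[OF indep]] g) auto
  then show ?thesis
    using assms by (intro indep_var_lebesgue_integral) (simp_all add: comp_def)
qed

definition trans_of_rows :: "'s set \<Rightarrow> ('s \<Rightarrow> 'a \<times> 's \<Rightarrow> real) \<Rightarrow> 's \<Rightarrow> 'a \<Rightarrow> 's \<Rightarrow> real"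
  where "trans_of_rows R q x a z = (if x \<in> R then q x (a, z) else 0)"

lemma borel_measurable_trans_of_rows:
  "(\<lambda>q. trans_of_rows R q x a z) \<in> borel_measurable (PiM R (\<lambda>_. PiM UNIV (\<lambda>_. borel)))"
proof (cases "x \<in> R")
  case True
  from measurable_comp[OF measurable_component_singleton[OF True]
      measurable_component_singleton[of "(a, z)" UNIV "\<lambda>_. borel"]]
  show ?thesis using True by (simp add: trans_of_rows_def comp_def)
qed (simp add: trans_of_rows_def)

locale random_mdp = prob_space M
  for M :: "'w measure"
  and P :: "'w \<Rightarrow> 's::finite \<Rightarrow> 'a::finite \<Rightarrow> 's \<Rightarrow> real"
  and r :: "'s \<Rightarrow> 'a \<Rightarrow> real"
  and \<pi> :: "'s \<Rightarrow> 'a \<Rightarrow> real"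
  and \<gamma> :: real
  and E :: "('s \<times> 's) set" +
  assumes gamma: "0 \<le> \<gamma>" "\<gamma> < 1"
    and trans_nonneg: "\<And>\<omega> x a z. \<omega> \<in> space M \<Longrightarrow> 0 \<le> P \<omega> x a z"
    and trans_sum: "\<And>\<omega> x a. \<omega> \<in> space M \<Longrightarrow> (\<Sum>z\<in>UNIV. P \<omega> x a z) \<le> 1"
    and rows_indep: "indep_vars (\<lambda>_. PiM UNIV (\<lambda>_. borel)) (\<lambda>x \<omega>. (\<lambda>(a, z). P \<omega> x a z)) UNIV"
    and acyclic: "acyclic E"
    and trans_edge: "\<And>\<omega> x a z. \<omega> \<in> space M \<Longrightarrow> 0 < P \<omega> x a z \<Longrightarrow> (x, z) \<in> E"
    and policy_nonneg: "\<And>x a. 0 \<le> \<pi> x a"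
    and policy_sum: "\<And>x. (\<Sum>a\<in>UNIV. \<pi> x a) = 1"
begin

lemma trans_measurable [measurable]: "(\<lambda>\<omega>. P \<omega> x a z) \<in> borel_measurable M"
proof -
  have "(\<lambda>\<omega>. (\<lambda>(a, z). P \<omega> x a z)) \<in> measurable M (PiM UNIV (\<lambda>_. borel))"
    using rows_indep unfolding indep_vars_def by blast
  from measurable_comp[OF this measurable_component_singleton[of "(a, z)"]]
  show ?thesis by (simp add: comp_def)
qed

lemma trans_integrable: "integrable M (\<lambda>\<omega>. P \<omega> x a z)"
proof (rule integrable_const_bound[where B=1])
  show "AE \<omega> in M. norm (P \<omega> x a z) \<le> 1"
  proof (rule AE_I2)
    fix \<omega> assume \<omega>: "\<omega> \<in> space M"
    have "P \<omega> x a z \<le> (\<Sum>z'\<in>UNIV. P \<omega> x a z')"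
      using trans_nonneg[OF \<omega>] by (intro member_le_sum) auto
    then show "norm (P \<omega> x a z) \<le> 1"
      using trans_nonneg[OF \<omega>, of x a z] trans_sum[OF \<omega>, of x a] by simp
  qed
qed simp

lemma value_fun_integrable: "integrable M (\<lambda>\<omega>. value_fun \<gamma> r \<pi> (P \<omega>) y)"
proof (rule integrable_const_bound)
  show "AE \<omega> in M. norm (value_fun \<gamma> r \<pi> (P \<omega>) y) \<le> (\<Sum>x\<in>UNIV. \<Sum>a\<in>UNIV. \<bar>r x a\<bar>) / (1 - \<gamma>)"
    using trans_nonneg trans_sum policy_nonneg policy_sum gamma
    by (intro AE_I2) (simp add: abs_value_fun_le)
qed (simp add: borel_measurable_value_fun)

lemma reachable_closed:
  assumes "\<omega> \<in> space M"
  shows "closed_under_trans (P \<omega>) (E\<^sup>* `` {y})"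
  unfolding closed_under_trans_def
proof (intro ballI allI impI)
  fix x a z
  assume x: "x \<in> E\<^sup>* `` {y}" and "P \<omega> x a z \<noteq> 0"
  then have "(x, z) \<in> E"
    using trans_nonneg[OF assms, of x a z] trans_edge[OF assms, of x a z] by simp
  with x show "z \<in> E\<^sup>* `` {y}" by (auto intro: rtrancl_into_rtrancl)
qed

lemma value_fun_eq_trans_of_rows:
  assumes "\<omega> \<in> space M"
  shows "value_fun \<gamma> r \<pi> (P \<omega>) y = value_fun \<gamma> r \<pi>
    (trans_of_rows (E\<^sup>* `` {y}) (restrict (\<lambda>x. (\<lambda>(a, z). P \<omega> x a z)) (E\<^sup>* `` {y}))) y"
  by (intro value_fun_cong_closed[OF reachable_closed[OF assms]])
    (auto simp: trans_of_rows_def fun_eq_iff)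

lemma integral_trans_mult_value_fun:
  "(\<integral>\<omega>. P \<omega> s a y * value_fun \<gamma> r \<pi> (P \<omega>) y \<partial>M)
    = mean_trans M P s a y * (\<integral>\<omega>. value_fun \<gamma> r \<pi> (P \<omega>) y \<partial>M)"
proof (cases "(s, y) \<in> E")
  case False
  then have "P \<omega> s a y = 0" if "\<omega> \<in> space M" for \<omega>
    using trans_nonneg[OF that, of s a y] trans_edge[OF that, of s a y] by fastforce
  then show ?thesis
    unfolding mean_trans_def by (simp cong: Bochner_Integration.integral_cong)
next
  case True
  define R where "R = E\<^sup>* `` {y}"
  have "s \<notin> R"
    using True acyclic unfolding R_def acyclic_def by (auto intro: rtrancl_into_trancl2)
  define V where "V q = value_fun \<gamma> r \<pi> (trans_of_rows R q) y" for q
  have V_eq: "value_fun \<gamma> r \<pi> (P \<omega>) y = V (restrict (\<lambda>x. (\<lambda>(a, z). P \<omega> x a z)) R)"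
    if "\<omega> \<in> space M" for \<omega>
    unfolding V_def R_def using that by (rule value_fun_eq_trans_of_rows)
  have "V \<in> borel_measurable (PiM R (\<lambda>_. PiM UNIV (\<lambda>_. borel)))"
    unfolding V_def by (intro borel_measurable_value_fun borel_measurable_trans_of_rows)
  moreover have "integrable M (\<lambda>\<omega>. V (restrict (\<lambda>x. (\<lambda>(a, z). P \<omega> x a z)) R))"
    using value_fun_integrable[of y] by (simp add: V_eq cong: Bochner_Integration.integrable_cong)
  ultimately have "(\<integral>\<omega>. P \<omega> s a y * V (restrict (\<lambda>x. (\<lambda>(a, z). P \<omega> x a z)) R) \<partial>M)
      = (\<integral>\<omega>. P \<omega> s a y \<partial>M) * (\<integral>\<omega>. V (restrict (\<lambda>x. (\<lambda>(a, z). P \<omega> x a z)) R) \<partial>M)"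
    using indep_vars_integral_mult_restrict[OF rows_indep _ _ \<open>s \<notin> R\<close>, of "\<lambda>q. q (a, y)" V]
      trans_integrable by simp
  then show ?thesis
    unfolding mean_trans_def using V_eq by (simp cong: Bochner_Integration.integral_cong)
qed

end

theorem lemma3:
  fixes M :: "'w measure"
    and P :: "'w \<Rightarrow> 's::finite \<Rightarrow> 'a::finite \<Rightarrow> 's \<Rightarrow> real"
    and r :: "'s \<Rightarrow> 'a \<Rightarrow> real"
    and \<pi> :: "'s \<Rightarrow> 'a \<Rightarrow> real"
    and \<gamma> :: real
    and E :: "('s \<times> 's) set"
    and s :: 's
  assumes Phi: "prob_space M"
    and gamma: "0 \<le> \<gamma>" "\<gamma> < 1"
    and trans_nonneg: "\<forall>\<omega>\<in>space M. \<forall>x a y. 0 \<le> P \<omega> x a y"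
    and trans_sum: "\<forall>\<omega>\<in>space M. \<forall>x a. (\<Sum>y\<in>UNIV. P \<omega> x a y) \<le> 1"
    and A1: "prob_space.indep_vars M (\<lambda>_. PiM UNIV (\<lambda>_. borel))
               (\<lambda>x \<omega>. (\<lambda>(a, y). P \<omega> x a y)) UNIV"
    and A2: "acyclic E" "\<forall>\<omega>\<in>space M. \<forall>x a y. 0 < P \<omega> x a y \<longrightarrow> (x, y) \<in> E"
    and policy: "\<forall>x a. 0 \<le> \<pi> x a" "\<forall>x. (\<Sum>a\<in>UNIV. \<pi> x a) = 1"
  shows "(\<Sum>a\<in>UNIV. \<Sum>y\<in>UNIV.
            (\<integral>\<omega>. (\<pi> s a * P \<omega> s a y) * value_fun \<gamma> r \<pi> (P \<omega>) y \<partial>M))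
       = (\<Sum>a\<in>UNIV. \<Sum>y\<in>UNIV.
            (\<pi> s a * mean_trans M P s a y) * (\<integral>\<omega>. value_fun \<gamma> r \<pi> (P \<omega>) y \<partial>M))"
proof -
  interpret random_mdp M P r \<pi> \<gamma> E
    by (intro random_mdp.intro random_mdp_axioms.intro Phi) (use assms in blast)+
  show ?thesis
    using integral_trans_mult_value_fun[of s] by (simp add: mult.assoc)
qed

end
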